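(* (Compactness Extrapolation Lemma.) Fix a dimension $d\geq1$ and real numbers $s_0<s_1$. Let $(u^\varepsilon)_{\varepsilon\in(0,1]}$ be a family of functions bounded in $\dot H^{s_0}\cap\dot H^{s_1}(\mathbb{R}^d)$ uniformly in $\varepsilon\in(0,1]$, and assume $u^\varepsilon\to u$ in $\dot H^{s_0}(\mathbb{R}^d)$ as $\varepsilon\to0$. Then $u^\varepsilon\to u$ in $\dot H^{s_1}(\mathbb{R}^d)$ if and only if $$\lim_{\varepsilon\to0}\|\mathds{1}_{|D|\geq\Theta_\varepsilon}u^\varepsilon\|_{\dot H^{s_1}}=0$$ for some $\Theta_\varepsilon>0$ satisfying $$\lim_{\varepsilon\to0}\Theta_\varepsilon=\infty\quad\text{and}\quad\lim_{\varepsilon\to0}\Theta_\varepsilon^{s_1-s_0}\|u^\varepsilon-u\|_{\dot H^{s_0}}=0.$$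
   Context: $\dot H^s(\mathbb{R}^d)$ denotes the homogeneous Sobolev space with norm $\||D|^s f\|_{L^2}$. For a bounded function $m$, $m(D)f=\mathcal{F}^{-1}(m(\xi)\mathcal{F}f(\xi))$; in particular $\mathds{1}_{|D|\geq\Theta}$ is the Fourier multiplier by the indicator of $\{|\xi|\geq\Theta\}$. *)

theory Defs
  imports "HOL-Analysis.Analysis"
begin

text \<open>Functions are represented on the Fourier side: a tempered distribution u is
  represented by its Fourier transform, a measurable function on the frequency space
  'a (any Euclidean space of dimension d = DIM('a) \<ge> 1). By Plancherel,
  the homogeneous Sobolev norm is the weighted L2 norm below.\<close>

definition hs_sq :: "real \<Rightarrow> ('a::euclidean_space \<Rightarrow> complex) \<Rightarrow> ennreal" where
  "hs_sq s f = (\<integral>\<^sup>+ \<xi>. ennreal ((norm \<xi> powr s * cmod (f \<xi>))\<^sup>2) \<partial>lborel)"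

definition hnorm :: "real \<Rightarrow> ('a::euclidean_space \<Rightarrow> complex) \<Rightarrow> ennreal" where
  "hnorm s f = (if hs_sq s f = \<infinity> then \<infinity> else ennreal (sqrt (enn2real (hs_sq s f))))"

definition high_freq :: "real \<Rightarrow> ('a::euclidean_space \<Rightarrow> complex) \<Rightarrow> ('a \<Rightarrow> complex)" where
  "high_freq \<Theta> f = (\<lambda>\<xi>. if norm \<xi> \<ge> \<Theta> then f \<xi> else 0)"

end

theory Submission
  imports Defs
begin

text \<open>Split the frequencies at a threshold Theta. Below Theta the H^s1 norm is at most
  Theta^(s1-s0) times the H^s0 norm; above Theta the tail of the fixed limit u vanishes as
  Theta -> oo, once u is known to lie in H^s1, which follows from the uniform H^s1 bound by
  testing on low frequencies. Hence ||u_eps - u||_s1 is controlled by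
  Theta^(s1-s0) ||u_eps - u||_s0 plus the high frequencies of u_eps and u, and conversely the
  high frequencies of u_eps are controlled by ||u_eps - u||_s1 and those of u. A threshold with
  Theta_eps^(s1-s0) ||u_eps - u||_s0 -> 0 always exists. All estimates are made on squared
  norms, where (a + b)^2 <= 2 a^2 + 2 b^2 replaces the triangle inequality.\<close>

definition low_freq :: "real \<Rightarrow> ('a::euclidean_space \<Rightarrow> complex) \<Rightarrow> ('a \<Rightarrow> complex)" where
  "low_freq \<Theta> f = (\<lambda>\<xi>. if norm \<xi> < \<Theta> then f \<xi> else 0)"

lemma measurable_high_freq [measurable]:
  assumes [measurable]: "f \<in> borel_measurable borel"
  shows "high_freq \<Theta> f \<in> borel_measurable borel"
  unfolding high_freq_def by measurable

lemma measurable_low_freq [measurable]: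
  assumes [measurable]: "f \<in> borel_measurable borel"
  shows "low_freq \<Theta> f \<in> borel_measurable borel"
  unfolding low_freq_def by measurable

lemma hnorm_power2: "hnorm s f ^ 2 = hs_sq s f"
  by (cases "hs_sq s f = \<infinity>") (auto simp: hnorm_def ennreal_power less_top)

lemma tendsto_0_iff_power2_ennreal:
  fixes f :: "'b \<Rightarrow> ennreal"
  shows "(f \<longlongrightarrow> 0) F \<longleftrightarrow> ((\<lambda>x. f x ^ 2) \<longlongrightarrow> 0) F"
proof
  assume "(f \<longlongrightarrow> 0) F"
  then have "((\<lambda>x. f x * f x) \<longlongrightarrow> 0 * 0) F"
    by (intro tendsto_mult_ennreal) auto
  then show "((\<lambda>x. f x ^ 2) \<longlongrightarrow> 0) F"
    by (simp add: power2_eq_square)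
next
  assume sq: "((\<lambda>x. f x ^ 2) \<longlongrightarrow> 0) F"
  show "(f \<longlongrightarrow> 0) F"
    unfolding order_tendsto_iff
  proof (intro conjI allI impI)
    fix e :: ennreal
    assume "e > 0"
    then have "e ^ 2 > 0"
      by (simp add: power2_eq_square ennreal_zero_less_mult_iff)
    with sq have "\<forall>\<^sub>F x in F. f x ^ 2 < e ^ 2"
      by (simp add: order_tendsto_iff)
    then show "\<forall>\<^sub>F x in F. f x < e"
      by eventually_elim (meson not_le power_mono zero_le)
  qed simp
qed

lemma tendsto_hnorm_0_iff:
  "((\<lambda>x. hnorm s (f x)) \<longlongrightarrow> 0) F \<longleftrightarrow> ((\<lambda>x. hs_sq s (f x)) \<longlongrightarrow> 0) F"
  by (subst tendsto_0_iff_power2_ennreal) (simp add: hnorm_power2)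

lemma tendsto_weighted_hnorm_0_iff:
  "((\<lambda>x. ennreal (w x powr a) * hnorm s (f x)) \<longlongrightarrow> 0) F \<longleftrightarrow>
   ((\<lambda>x. ennreal (w x powr (2 * a)) * hs_sq s (f x)) \<longlongrightarrow> 0) F"
proof -
  have "(w x powr a) ^ 2 = w x powr (2 * a)" for x
    by (simp add: power2_eq_square powr_add[symmetric])
  then show ?thesis
    by (subst tendsto_0_iff_power2_ennreal) (simp add: power_mult_distrib hnorm_power2 ennreal_power)
qed

lemma hs_sq_quasi_triangle:
  assumes [measurable]: "f \<in> borel_measurable borel" "g \<in> borel_measurable borel"
    and dom: "\<And>\<xi>. cmod (h \<xi>) \<le> cmod (f \<xi>) + cmod (g \<xi>)"
  shows "hs_sq s h \<le> 2 * hs_sq s f + 2 * hs_sq s (g :: 'a::euclidean_space \<Rightarrow> complex)"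
proof -
  have "ennreal ((norm \<xi> powr s * cmod (h \<xi>))\<^sup>2) \<le>
    2 * ennreal ((norm \<xi> powr s * cmod (f \<xi>))\<^sup>2) + 2 * ennreal ((norm \<xi> powr s * cmod (g \<xi>))\<^sup>2)"
    for \<xi>
  proof -
    define w where "w = norm \<xi> powr s"
    have "w * cmod (h \<xi>) \<le> w * cmod (f \<xi>) + w * cmod (g \<xi>)"
      using mult_left_mono[OF dom, of w] by (simp add: w_def distrib_left)
    then have "(w * cmod (h \<xi>))\<^sup>2 \<le> (w * cmod (f \<xi>) + w * cmod (g \<xi>))\<^sup>2"
      by (simp add: power_mono w_def)
    also have "\<dots> \<le> 2 * (w * cmod (f \<xi>))\<^sup>2 + 2 * (w * cmod (g \<xi>))\<^sup>2"
      using sum_squares_ge_zero[of "w * cmod (f \<xi>) - w * cmod (g \<xi>)" 0]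
      by (simp add: power2_eq_square algebra_simps)
    finally have "ennreal ((w * cmod (h \<xi>))\<^sup>2) \<le> ennreal (2 * (w * cmod (f \<xi>))\<^sup>2 + 2 * (w * cmod (g \<xi>))\<^sup>2)"
      by (rule ennreal_leI)
    then show ?thesis
      by (simp add: w_def ennreal_mult)
  qed
  then have "hs_sq s h \<le> (\<integral>\<^sup>+ \<xi>. 2 * ennreal ((norm \<xi> powr s * cmod (f \<xi>))\<^sup>2)
      + 2 * ennreal ((norm \<xi> powr s * cmod (g \<xi>))\<^sup>2) \<partial>lborel)"
    unfolding hs_sq_def by (rule nn_integral_mono)
  also have "\<dots> = 2 * hs_sq s f + 2 * hs_sq s g"
    unfolding hs_sq_def by (simp add: nn_integral_add nn_integral_cmult)
  finally show ?thesis .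
qed

lemma powr_le_powr_mult_powr_diff:
  fixes x R :: real
  assumes "0 \<le> x" "x \<le> R" "s0 \<le> s1"
  shows "x powr s1 \<le> R powr (s1 - s0) * x powr s0"
proof (cases "x = 0")
  case False
  then have "x powr s1 = x powr (s1 - s0) * x powr s0"
    by (simp add: powr_add[symmetric])
  also have "\<dots> \<le> R powr (s1 - s0) * x powr s0"
    using assms by (intro mult_right_mono powr_mono2) auto
  finally show ?thesis .
qed simp

lemma hs_sq_low_freq_le:
  assumes [measurable]: "g \<in> borel_measurable borel" and "s0 \<le> s1"
  shows "hs_sq s1 (low_freq R g) \<le> ennreal (R powr (2 * (s1 - s0))) * hs_sq s0 (g :: 'a::euclidean_space \<Rightarrow> complex)"
proof -
  have "ennreal ((norm \<xi> powr s1 * cmod (low_freq R g \<xi>))\<^sup>2) \<le>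
    ennreal (R powr (2 * (s1 - s0))) * ennreal ((norm \<xi> powr s0 * cmod (g \<xi>))\<^sup>2)" for \<xi>
  proof (cases "norm \<xi> < R")
    case True
    have "norm \<xi> powr s1 * cmod (g \<xi>) \<le> R powr (s1 - s0) * (norm \<xi> powr s0 * cmod (g \<xi>))"
      using mult_right_mono[OF powr_le_powr_mult_powr_diff[of "norm \<xi>" R s0 s1] norm_ge_zero[of "g \<xi>"]]
        True assms(2) by (simp add: mult.assoc)
    then have "(norm \<xi> powr s1 * cmod (g \<xi>))\<^sup>2 \<le> (R powr (s1 - s0) * (norm \<xi> powr s0 * cmod (g \<xi>)))\<^sup>2"
      by (simp add: power_mono)
    also have "\<dots> = R powr (2 * (s1 - s0)) * (norm \<xi> powr s0 * cmod (g \<xi>))\<^sup>2"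
      by (simp add: power_mult_distrib power2_eq_square powr_add[symmetric])
    finally show ?thesis
      using True by (simp add: low_freq_def ennreal_mult[symmetric] ennreal_leI)
  qed (simp add: low_freq_def)
  then have "hs_sq s1 (low_freq R g) \<le>
      (\<integral>\<^sup>+ \<xi>. ennreal (R powr (2 * (s1 - s0))) * ennreal ((norm \<xi> powr s0 * cmod (g \<xi>))\<^sup>2) \<partial>lborel)"
    unfolding hs_sq_def by (rule nn_integral_mono)
  also have "\<dots> = ennreal (R powr (2 * (s1 - s0))) * hs_sq s0 g"
    unfolding hs_sq_def by (simp add: nn_integral_cmult)
  finally show ?thesis .
qed

lemma hs_sq_high_freq_antimono:
  "R \<le> R' \<Longrightarrow> hs_sq s (high_freq R' g) \<le> hs_sq s (high_freq R g)"
  unfolding hs_sq_def high_freq_def by (intro nn_integral_mono) auto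

lemma hs_sq_eq_SUP_low_freq:
  assumes [measurable]: "g \<in> borel_measurable borel"
  shows "hs_sq s g = (SUP n. hs_sq s (low_freq (real n) g))"
proof -
  define f where "f n \<xi> = ennreal ((norm \<xi> powr s * cmod (low_freq (real n) g \<xi>))\<^sup>2)" for n \<xi>
  have [measurable]: "f n \<in> borel_measurable lborel" for n
    unfolding f_def by measurable
  have integral_f: "integral\<^sup>N lborel (f n) = hs_sq s (low_freq (real n) g)" for n
    unfolding f_def hs_sq_def ..
  have "incseq f"
    unfolding incseq_def le_fun_def f_def low_freq_def by auto
  have SUP_f: "(SUP n. f n \<xi>) = ennreal ((norm \<xi> powr s * cmod (g \<xi>))\<^sup>2)" for \<xi>
  proof (rule antisym)
    show "(SUP n. f n \<xi>) \<le> ennreal ((norm \<xi> powr s * cmod (g \<xi>))\<^sup>2)"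
      by (rule SUP_least) (simp add: f_def low_freq_def)
    obtain m :: nat where "norm \<xi> < real m"
      using reals_Archimedean2 by blast
    then have "f m \<xi> = ennreal ((norm \<xi> powr s * cmod (g \<xi>))\<^sup>2)"
      by (simp add: f_def low_freq_def)
    then show "ennreal ((norm \<xi> powr s * cmod (g \<xi>))\<^sup>2) \<le> (SUP n. f n \<xi>)"
      by (metis SUP_upper UNIV_I)
  qed
  have "hs_sq s g = (\<integral>\<^sup>+ \<xi>. (SUP n. f n \<xi>) \<partial>lborel)"
    unfolding hs_sq_def SUP_f ..
  also have "\<dots> = (SUP n. integral\<^sup>N lborel (f n))"
    using \<open>incseq f\<close> by (rule nn_integral_monotone_convergence_SUP) simp
  finally show ?thesis
    by (simp add: integral_f)
qed

lemma tendsto_hs_sq_high_freq: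
  assumes [measurable]: "g \<in> borel_measurable borel" and "hs_sq s g < \<infinity>"
    and "filterlim \<Theta> at_top F"
  shows "((\<lambda>x. hs_sq s (high_freq (\<Theta> x) g)) \<longlongrightarrow> 0) F"
proof -
  define f where "f n \<xi> = ennreal ((norm \<xi> powr s * cmod (high_freq (real n) g \<xi>))\<^sup>2)" for n \<xi>
  have [measurable]: "f n \<in> borel_measurable lborel" for n
    unfolding f_def by measurable
  have integral_f: "integral\<^sup>N lborel (f n) = hs_sq s (high_freq (real n) g)" for n
    unfolding f_def hs_sq_def ..
  have "decseq f"
    by (intro decseq_SucI le_funI) (simp add: f_def high_freq_def)
  have INF_f: "(INF n. f n \<xi>) = 0" for \<xi>
  proof -
    obtain m :: nat where "norm \<xi> < real m"
      using reals_Archimedean2 by blast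
    then have "f m \<xi> = 0"
      by (simp add: f_def high_freq_def)
    then show ?thesis
      by (metis INF_lower UNIV_I le_zero_eq)
  qed
  have "integral\<^sup>N lborel (f 0) < \<infinity>"
    using assms(2) by (simp add: integral_f high_freq_def)
  then have "(INF n. hs_sq s (high_freq (real n) g)) = 0"
    using nn_integral_monotone_convergence_INF_decseq[OF \<open>decseq f\<close>, of lborel 0]
    by (simp add: integral_f INF_f)
  then have "(\<lambda>n. hs_sq s (high_freq (real n) g)) \<longlonglongrightarrow> 0"
    using LIMSEQ_INF[of "\<lambda>n. hs_sq s (high_freq (real n) g)"]
    by (simp add: INF_f decseq_def hs_sq_high_freq_antimono)
  show ?thesis
    unfolding order_tendsto_iff
  proof (intro conjI allI impI)
    fix e :: ennreal
    assume "e > 0"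
    with \<open>(\<lambda>n. hs_sq s (high_freq (real n) g)) \<longlonglongrightarrow> 0\<close>
    obtain n where n: "hs_sq s (high_freq (real n) g) < e"
      by (auto simp: order_tendsto_iff dest!: eventually_happens)
    have "\<forall>\<^sub>F x in F. real n \<le> \<Theta> x"
      using assms(3) by (simp add: filterlim_at_top)
    then show "\<forall>\<^sub>F x in F. hs_sq s (high_freq (\<Theta> x) g) < e"
      by eventually_elim (use n hs_sq_high_freq_antimono in \<open>blast intro: le_less_trans\<close>)
  qed simp
qed

lemma hs_sq_le_of_bounded_approximation:
  assumes "F \<noteq> bot" "s0 \<le> s1"
    and [measurable]: "u \<in> borel_measurable borel"
    and U_bound: "\<forall>\<^sub>F x in F. U x \<in> borel_measurable borel \<and> hs_sq s1 (U x) \<le> K"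
    and conv: "((\<lambda>x. hs_sq s0 (\<lambda>\<xi>. U x \<xi> - u \<xi>)) \<longlongrightarrow> 0) F"
  shows "hs_sq s1 u \<le> 2 * K"
proof -
  have "hs_sq s1 (low_freq R u) \<le> 2 * K" for R
  proof -
    define c where "c = ennreal (R powr (2 * (s1 - s0)))"
    have "((\<lambda>x. 2 * (c * hs_sq s0 (\<lambda>\<xi>. U x \<xi> - u \<xi>)) + 2 * K) \<longlongrightarrow> 2 * (c * 0) + 2 * K) F"
      by (intro tendsto_add tendsto_const ennreal_tendsto_cmult conv) (simp_all add: c_def)
    moreover have "\<forall>\<^sub>F x in F. hs_sq s1 (low_freq R u) \<le> 2 * (c * hs_sq s0 (\<lambda>\<xi>. U x \<xi> - u \<xi>)) + 2 * K"
      using U_bound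
    proof eventually_elim
      case (elim x)
      then have [measurable]: "U x \<in> borel_measurable borel"
        by simp
      have "hs_sq s1 (low_freq R u) \<le>
          2 * hs_sq s1 (low_freq R (\<lambda>\<xi>. U x \<xi> - u \<xi>)) + 2 * hs_sq s1 (U x)"
        by (rule hs_sq_quasi_triangle)
          (auto simp: low_freq_def, metis add.commute norm_minus_commute norm_triangle_sub)
      also have "\<dots> \<le> 2 * (c * hs_sq s0 (\<lambda>\<xi>. U x \<xi> - u \<xi>)) + 2 * K"
        using elim hs_sq_low_freq_le[of "\<lambda>\<xi>. U x \<xi> - u \<xi>" s0 s1 R] \<open>s0 \<le> s1\<close>
        by (intro add_mono mult_left_mono) (auto simp: c_def)
      finally show ?case .
    qed
    ultimately show ?thesis
      using tendsto_le[OF \<open>F \<noteq> bot\<close> _ tendsto_const] by simp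
  qed
  then show ?thesis
    by (simp add: hs_sq_eq_SUP_low_freq SUP_least)
qed

text \<open>The witness is Theta = t powr (-1/(2c)) with t eps = eps + N eps, so that
  Theta^c N <= t^(-1/2) t = sqrt t; the summand eps keeps t positive.\<close>

lemma exists_cutoff_at_right_0:
  fixes N :: "real \<Rightarrow> ennreal"
  assumes N: "(N \<longlongrightarrow> 0) (at_right 0)" and "c > 0"
  shows "\<exists>\<Theta>. (\<forall>\<epsilon>>0. \<Theta> \<epsilon> > 0) \<and> filterlim \<Theta> at_top (at_right 0) \<and>
    ((\<lambda>\<epsilon>. ennreal (\<Theta> \<epsilon> powr c) * N \<epsilon>) \<longlongrightarrow> 0) (at_right 0)"
proof -
  define t where "t \<epsilon> = \<epsilon> + enn2real (N \<epsilon>)" for \<epsilon>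
  define \<Theta> where "\<Theta> \<epsilon> = t \<epsilon> powr (- 1 / (2 * c))" for \<epsilon>
  have t_pos: "t \<epsilon> > 0" if "\<epsilon> > 0" for \<epsilon>
    using that by (simp add: t_def add_pos_nonneg)
  have pos: "\<forall>\<^sub>F \<epsilon> in at_right 0. (0::real) < \<epsilon>"
    by (simp add: eventually_at_right_less)
  then have t_pos_ev: "\<forall>\<^sub>F \<epsilon> in at_right 0. 0 < t \<epsilon>"
    by eventually_elim (rule t_pos)
  have "(t \<longlongrightarrow> 0 + enn2real 0) (at_right 0)"
    unfolding t_def by (intro tendsto_add tendsto_ident_at tendsto_enn2real) (simp_all add: N)
  then have t_lim: "(t \<longlongrightarrow> 0) (at_right 0)"
    by simp
  have "((\<lambda>\<epsilon>. t \<epsilon> powr (1 / (2 * c))) \<longlongrightarrow> 0) (at_right 0)"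
    using t_pos_ev \<open>c > 0\<close>
    by (intro tendsto_zero_powrI[OF t_lim tendsto_const]) (auto elim!: eventually_mono)
  then have "filterlim (\<lambda>\<epsilon>. t \<epsilon> powr (1 / (2 * c))) (at_right 0) (at_right 0)"
    using t_pos_ev by (intro tendsto_imp_filterlim_at_right) (auto elim!: eventually_mono)
  then have "filterlim (\<lambda>\<epsilon>. inverse (t \<epsilon> powr (1 / (2 * c)))) at_top (at_right 0)"
    by (rule filterlim_compose[OF filterlim_inverse_at_top_right])
  moreover have "\<Theta> = (\<lambda>\<epsilon>. inverse (t \<epsilon> powr (1 / (2 * c))))"
    by (simp add: fun_eq_iff \<Theta>_def powr_minus[symmetric])
  ultimately have \<Theta>_lim: "filterlim \<Theta> at_top (at_right 0)"
    by simp
  have "\<forall>\<^sub>F \<epsilon> in at_right 0. N \<epsilon> < 1"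
    using N by (simp add: order_tendsto_iff)
  with pos have bound: "\<forall>\<^sub>F \<epsilon> in at_right 0. ennreal (\<Theta> \<epsilon> powr c) * N \<epsilon> \<le> ennreal (sqrt (t \<epsilon>))"
  proof eventually_elim
    case (elim \<epsilon>)
    then have "N \<epsilon> = ennreal (enn2real (N \<epsilon>))"
      using ennreal_1 ennreal_less_top[of 1] by (metis ennreal_enn2real order.strict_trans)
    also have "\<dots> \<le> ennreal (t \<epsilon>)"
      using elim(1) by (simp add: t_def ennreal_leI)
    finally have "ennreal (\<Theta> \<epsilon> powr c) * N \<epsilon> \<le> ennreal (\<Theta> \<epsilon> powr c) * ennreal (t \<epsilon>)"
      by (rule mult_left_mono) simp
    also have "\<dots> = ennreal (t \<epsilon> powr (- 1 / 2) * t \<epsilon>)"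
      using \<open>c > 0\<close> t_pos[OF elim(1)] by (simp add: \<Theta>_def powr_powr ennreal_mult)
    also have "t \<epsilon> powr (- 1 / 2) * t \<epsilon> = sqrt (t \<epsilon>)"
      using t_pos[OF elim(1)] powr_add[of "t \<epsilon>" "- 1 / 2" 1] by (simp add: powr_half_sqrt)
    finally show ?case .
  qed
  have sqrt_lim: "((\<lambda>\<epsilon>. ennreal (sqrt (t \<epsilon>))) \<longlongrightarrow> 0) (at_right 0)"
    using tendsto_ennrealI[OF tendsto_real_sqrt[OF t_lim]] by simp
  have "((\<lambda>\<epsilon>. ennreal (\<Theta> \<epsilon> powr c) * N \<epsilon>) \<longlongrightarrow> 0) (at_right 0)"
    by (rule tendsto_sandwich[OF _ bound tendsto_const sqrt_lim]) simp
  moreover have "\<forall>\<epsilon>>0. \<Theta> \<epsilon> > 0"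
    using t_pos by (force simp: \<Theta>_def)
  ultimately show ?thesis
    using \<Theta>_lim by blast
qed

lemma tendsto_hs_sq_high_freq_of_convergent:
  assumes [measurable]: "u \<in> borel_measurable borel" and "hs_sq s u < \<infinity>"
    and meas: "\<forall>\<^sub>F x in F. U x \<in> borel_measurable borel"
    and conv: "((\<lambda>x. hs_sq s (\<lambda>\<xi>. U x \<xi> - u \<xi>)) \<longlongrightarrow> 0) F"
    and "filterlim \<Theta> at_top F"
  shows "((\<lambda>x. hs_sq s (high_freq (\<Theta> x) (U x))) \<longlongrightarrow> 0) F"
proof (rule tendsto_sandwich[OF _ _ tendsto_const])
  show "\<forall>\<^sub>F x in F. hs_sq s (high_freq (\<Theta> x) (U x)) \<le>
      2 * hs_sq s (\<lambda>\<xi>. U x \<xi> - u \<xi>) + 2 * hs_sq s (high_freq (\<Theta> x) u)"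
    using meas
  proof eventually_elim
    case (elim x)
    then have [measurable]: "U x \<in> borel_measurable borel" .
    show ?case
      by (rule hs_sq_quasi_triangle)
        (auto simp: high_freq_def, metis add.commute norm_triangle_sub)
  qed
  have "((\<lambda>x. 2 * hs_sq s (\<lambda>\<xi>. U x \<xi> - u \<xi>) + 2 * hs_sq s (high_freq (\<Theta> x) u)) \<longlongrightarrow> 2 * 0 + 2 * 0) F"
    by (intro tendsto_add ennreal_tendsto_cmult conv tendsto_hs_sq_high_freq assms) simp_all
  then show "((\<lambda>x. 2 * hs_sq s (\<lambda>\<xi>. U x \<xi> - u \<xi>) + 2 * hs_sq s (high_freq (\<Theta> x) u)) \<longlongrightarrow> 0) F"
    by simp
qed simp

lemma tendsto_hs_sq_diff_of_high_freq:
  assumes "s0 \<le> s1" and [measurable]: "u \<in> borel_measurable borel" and "hs_sq s1 u < \<infinity>"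
    and meas: "\<forall>\<^sub>F x in F. U x \<in> borel_measurable borel"
    and "filterlim \<Theta> at_top F"
    and low: "((\<lambda>x. ennreal (\<Theta> x powr (2 * (s1 - s0))) * hs_sq s0 (\<lambda>\<xi>. U x \<xi> - u \<xi>)) \<longlongrightarrow> 0) F"
    and high: "((\<lambda>x. hs_sq s1 (high_freq (\<Theta> x) (U x))) \<longlongrightarrow> 0) F"
  shows "((\<lambda>x. hs_sq s1 (\<lambda>\<xi>. U x \<xi> - u \<xi>)) \<longlongrightarrow> 0) F"
proof (rule tendsto_sandwich[OF _ _ tendsto_const])
  define B where "B x = 2 * (ennreal (\<Theta> x powr (2 * (s1 - s0))) * hs_sq s0 (\<lambda>\<xi>. U x \<xi> - u \<xi>))
    + 2 * (2 * hs_sq s1 (high_freq (\<Theta> x) (U x)) + 2 * hs_sq s1 (high_freq (\<Theta> x) u))" for x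
  show "\<forall>\<^sub>F x in F. hs_sq s1 (\<lambda>\<xi>. U x \<xi> - u \<xi>) \<le> B x"
    using meas
  proof eventually_elim
    case (elim x)
    then have [measurable]: "U x \<in> borel_measurable borel" .
    have "hs_sq s1 (\<lambda>\<xi>. U x \<xi> - u \<xi>) \<le> 2 * hs_sq s1 (low_freq (\<Theta> x) (\<lambda>\<xi>. U x \<xi> - u \<xi>))
        + 2 * hs_sq s1 (\<lambda>\<xi>. high_freq (\<Theta> x) (U x) \<xi> - high_freq (\<Theta> x) u \<xi>)"
      by (rule hs_sq_quasi_triangle) (auto simp: low_freq_def high_freq_def)
    also have "\<dots> \<le> B x"
      unfolding B_def
    proof (intro add_mono mult_left_mono)
      show "hs_sq s1 (low_freq (\<Theta> x) (\<lambda>\<xi>. U x \<xi> - u \<xi>)) \<le>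
          ennreal (\<Theta> x powr (2 * (s1 - s0))) * hs_sq s0 (\<lambda>\<xi>. U x \<xi> - u \<xi>)"
        using \<open>s0 \<le> s1\<close> by (intro hs_sq_low_freq_le) simp_all
      show "hs_sq s1 (\<lambda>\<xi>. high_freq (\<Theta> x) (U x) \<xi> - high_freq (\<Theta> x) u \<xi>) \<le>
          2 * hs_sq s1 (high_freq (\<Theta> x) (U x)) + 2 * hs_sq s1 (high_freq (\<Theta> x) u)"
        by (rule hs_sq_quasi_triangle) (simp_all add: norm_triangle_ineq4)
    qed simp_all
    finally show ?case .
  qed
  have "(B \<longlongrightarrow> 2 * 0 + 2 * (2 * 0 + 2 * 0)) F"
    unfolding B_def
    by (intro tendsto_add ennreal_tendsto_cmult low high tendsto_hs_sq_high_freq assms) simp_all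
  then show "(B \<longlongrightarrow> 0) F"
    by simp
qed simp

theorem lemma1p4:
  fixes U :: "real \<Rightarrow> ('a::euclidean_space \<Rightarrow> complex)"
    and u :: "'a \<Rightarrow> complex"
    and s0 s1 :: real
  assumes "s0 < s1"
    and "\<And>\<epsilon>. \<epsilon> \<in> {0<..1} \<Longrightarrow> U \<epsilon> \<in> borel_measurable lborel"
    and "u \<in> borel_measurable lborel"
    and "\<exists>C::real. \<forall>\<epsilon>\<in>{0<..1}. hnorm s0 (U \<epsilon>) \<le> ennreal C \<and> hnorm s1 (U \<epsilon>) \<le> ennreal C"
    and "((\<lambda>\<epsilon>. hnorm s0 (\<lambda>\<xi>. U \<epsilon> \<xi> - u \<xi>)) \<longlongrightarrow> 0) (at_right 0)"
  shows "((\<lambda>\<epsilon>. hnorm s1 (\<lambda>\<xi>. U \<epsilon> \<xi> - u \<xi>)) \<longlongrightarrow> 0) (at_right 0) \<longleftrightarrow>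
    (\<exists>\<Theta> :: real \<Rightarrow> real.
        (\<forall>\<epsilon>\<in>{0<..1}. \<Theta> \<epsilon> > 0)
      \<and> filterlim \<Theta> at_top (at_right 0)
      \<and> ((\<lambda>\<epsilon>. ennreal (\<Theta> \<epsilon> powr (s1 - s0)) * hnorm s0 (\<lambda>\<xi>. U \<epsilon> \<xi> - u \<xi>)) \<longlongrightarrow> 0) (at_right 0)
      \<and> ((\<lambda>\<epsilon>. hnorm s1 (high_freq (\<Theta> \<epsilon>) (U \<epsilon>))) \<longlongrightarrow> 0) (at_right 0))"
proof -
  obtain C :: real where C: "\<forall>\<epsilon>\<in>{0<..1}. hnorm s1 (U \<epsilon>) \<le> ennreal C"
    using assms(4) by blast
  have u_meas [measurable]: "u \<in> borel_measurable borel"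
    using assms(3) by simp
  have "\<forall>\<^sub>F \<epsilon> in at_right 0. \<epsilon> \<in> {0<..1::real}"
    by (auto simp: eventually_at_right_field intro!: exI[of _ 1])
  then have U_bound: "\<forall>\<^sub>F \<epsilon> in at_right 0. U \<epsilon> \<in> borel_measurable borel \<and> hs_sq s1 (U \<epsilon>) \<le> ennreal C ^ 2"
    by eventually_elim (use assms(2) C in \<open>auto simp: hnorm_power2[symmetric] power_mono\<close>)
  have conv0: "((\<lambda>\<epsilon>. hs_sq s0 (\<lambda>\<xi>. U \<epsilon> \<xi> - u \<xi>)) \<longlongrightarrow> 0) (at_right 0)"
    using assms(5) by (simp add: tendsto_hnorm_0_iff)
  have "hs_sq s1 u \<le> 2 * ennreal C ^ 2"
    using \<open>s0 < s1\<close> by (intro hs_sq_le_of_bounded_approximation[OF _ _ u_meas U_bound conv0]) simp_all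
  then have u_fin: "hs_sq s1 u < \<infinity>"
    by (rule le_less_trans) (simp add: ennreal_mult_less_top power_less_top_ennreal)
  from U_bound have meas: "\<forall>\<^sub>F \<epsilon> in at_right 0. U \<epsilon> \<in> borel_measurable borel"
    by (rule eventually_mono) simp
  obtain \<Theta> where \<Theta>_pos: "\<forall>\<epsilon>>0. \<Theta> \<epsilon> > 0" and \<Theta>_lim: "filterlim \<Theta> at_top (at_right 0)"
    and \<Theta>_low: "((\<lambda>\<epsilon>. ennreal (\<Theta> \<epsilon> powr (2 * (s1 - s0))) * hs_sq s0 (\<lambda>\<xi>. U \<epsilon> \<xi> - u \<xi>)) \<longlongrightarrow> 0)
      (at_right 0)"
    using exists_cutoff_at_right_0[OF conv0, of "2 * (s1 - s0)"] \<open>s0 < s1\<close> by auto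
  from \<Theta>_pos have \<Theta>_pos_unit: "\<forall>\<epsilon>\<in>{0<..1}. \<Theta> \<epsilon> > 0"
    by simp
  show ?thesis
    unfolding tendsto_hnorm_0_iff tendsto_weighted_hnorm_0_iff
  proof (intro iffI exI[of _ \<Theta>] conjI \<Theta>_pos_unit \<Theta>_lim \<Theta>_low)
    show "((\<lambda>\<epsilon>. hs_sq s1 (high_freq (\<Theta> \<epsilon>) (U \<epsilon>))) \<longlongrightarrow> 0) (at_right 0)"
      if "((\<lambda>\<epsilon>. hs_sq s1 (\<lambda>\<xi>. U \<epsilon> \<xi> - u \<xi>)) \<longlongrightarrow> 0) (at_right 0)"
      using that by (rule tendsto_hs_sq_high_freq_of_convergent[OF u_meas u_fin meas _ \<Theta>_lim])
  qed (blast intro: tendsto_hs_sq_diff_of_high_freq[OF less_imp_le[OF \<open>s0 < s1\<close>] u_meas u_fin meas])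
qed

end
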